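(* Let $p=\sum_{k=1}^K f_k$ and $q=\sum_{j=1}^J g_j$ be keypoint distributions on $\mathbb{R}^d$ that are partners. Then the set of local maxima of $\max(p,q)$ equals the union of the sets of local maxima of $p$ and of $q$, namely $\{\mu_{f_k}\}_{k=1}^K\cup\{\mu_{g_j}\}_{j=1}^J$.
   Context: "Local maximum" of a function $h:\mathbb{R}^d\to\mathbb{R}$ means a strict local maximum: a point $y$ with a neighbourhood $U$ such that $h(x)<h(y)$ for all $x\in U\setminus\{y\}$. A keypoint is a $\mathcal{C}^2$ function $f:\mathbb{R}^d\to[0,\infty)$ with compact support that is unimodal: it has exactly one local maximum, denoted $\mu_f$, which is also its global maximizer, $\mu_f=\operatorname{argmax}_x f(x)$. A keypoint $f$ is subsumed by a keypoint $g$ if there is no neighbourhood $\mathcal{X}$ of $\mu_f$ such that $f(x)\ge g(x)$ for all $x\in\mathcal{X}$. Two keypoints $f,g$ are partners if neither is subsumed by the other. A keypoint distribution is a function $p=\sum_{k=1}^K f_k$ where the $f_k$ are keypoints with pairwise disjoint supports. Two keypoint distributions $p=\sum_k f_k$ and $q=\sum_j g_j$ are partners if $f_k$ and $g_j$ are partner keypoints for every $k$ and $j$. *)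

theory Defs
  imports "HOL-Analysis.Analysis"
begin

definition strict_local_max :: "('a::real_normed_vector \<Rightarrow> real) \<Rightarrow> 'a \<Rightarrow> bool" where
  "strict_local_max h y \<longleftrightarrow> (\<exists>U. open U \<and> y \<in> U \<and> (\<forall>x\<in>U - {y}. h x < h y))"

definition C2 :: "('a::euclidean_space \<Rightarrow> real) \<Rightarrow> bool" where
  "C2 f \<longleftrightarrow> (\<exists>(Df :: 'a \<Rightarrow> 'a \<Rightarrow>\<^sub>L real) (D2f :: 'a \<Rightarrow> 'a \<Rightarrow>\<^sub>L ('a \<Rightarrow>\<^sub>L real)).
      (\<forall>x. (f has_derivative blinfun_apply (Df x)) (at x)) \<and>
      (\<forall>x. (Df has_derivative blinfun_apply (D2f x)) (at x)) \<and>
      continuous_on UNIV D2f)"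

definition fsupp :: "('a::real_normed_vector \<Rightarrow> real) \<Rightarrow> 'a set" where
  "fsupp f = closure {x. f x \<noteq> 0}"

definition keypoint :: "('a::euclidean_space \<Rightarrow> real) \<Rightarrow> bool" where
  "keypoint f \<longleftrightarrow> C2 f \<and> (\<forall>x. 0 \<le> f x) \<and> compact (fsupp f) \<and>
     (\<exists>!y. strict_local_max f y) \<and>
     (\<forall>y. strict_local_max f y \<longrightarrow> (\<forall>x. f x \<le> f y))"

definition kp_mu :: "('a::euclidean_space \<Rightarrow> real) \<Rightarrow> 'a" where
  "kp_mu f = (THE y. strict_local_max f y)"

definition subsumed :: "('a::euclidean_space \<Rightarrow> real) \<Rightarrow> ('a \<Rightarrow> real) \<Rightarrow> bool" where
  "subsumed f g \<longleftrightarrow> \<not> (\<exists>X. open X \<and> kp_mu f \<in> X \<and> (\<forall>x\<in>X. g x \<le> f x))"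

definition kp_partners :: "('a::euclidean_space \<Rightarrow> real) \<Rightarrow> ('a \<Rightarrow> real) \<Rightarrow> bool" where
  "kp_partners f g \<longleftrightarrow> \<not> subsumed f g \<and> \<not> subsumed g f"

definition keypoint_family :: "'i set \<Rightarrow> ('i \<Rightarrow> 'a::euclidean_space \<Rightarrow> real) \<Rightarrow> bool" where
  "keypoint_family I F \<longleftrightarrow> finite I \<and> (\<forall>k\<in>I. keypoint (F k)) \<and>
     (\<forall>k\<in>I. \<forall>k'\<in>I. k \<noteq> k' \<longrightarrow> fsupp (F k) \<inter> fsupp (F k') = {})"

definition kd :: "'i set \<Rightarrow> ('i \<Rightarrow> 'a::euclidean_space \<Rightarrow> real) \<Rightarrow> 'a \<Rightarrow> real" where
  "kd I F = (\<lambda>x. \<Sum>k\<in>I. F k x)"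

definition kd_partners :: "'i set \<Rightarrow> ('i \<Rightarrow> 'a::euclidean_space \<Rightarrow> real) \<Rightarrow>
    'j set \<Rightarrow> ('j \<Rightarrow> 'a \<Rightarrow> real) \<Rightarrow> bool" where
  "kd_partners I F J G \<longleftrightarrow> (\<forall>k\<in>I. \<forall>j\<in>J. kp_partners (F k) (G j))"

end

theory Submission
  imports Defs
begin

text \<open>Supports of a keypoint distribution are disjoint and closed, so near any point it agrees
  with the one component whose support contains the point, or vanishes identically; hence its
  strict local maxima are exactly the maxima of its components. At the maximum of a component f
  of p, being partners means that every component of q lies below f nearby, hence so does q, and
  max(p, q) agrees with f there. Conversely a strict local maximum of max(p, q) is one of
  whichever of p, q attains the larger value at it.\<close>

lemma strict_local_max_iff_eventually:
  "strict_local_max h y \<longleftrightarrow> (\<forall>\<^sub>F x in at y. h x < h y)"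
  unfolding strict_local_max_def eventually_at_topological by blast

lemma strict_local_max_cong_nhds:
  assumes "\<forall>\<^sub>F x in nhds y. h x = g x" and "strict_local_max g y"
  shows "strict_local_max h y"
proof -
  have "h y = g y" using assms(1) by (rule eventually_nhds_x_imp_x)
  moreover have "\<forall>\<^sub>F x in at y. h x = g x"
    using assms(1) by (simp add: eventually_nhds_conv_at)
  moreover have "\<forall>\<^sub>F x in at y. g x < g y"
    using assms(2) by (simp add: strict_local_max_iff_eventually)
  ultimately have "\<forall>\<^sub>F x in at y. h x < h y"
    by (auto elim: eventually_mono[OF eventually_conj])
  then show ?thesis by (simp add: strict_local_max_iff_eventually)
qed

lemma not_strict_local_max_if_locally_const:
  fixes h :: "'a::{real_normed_vector, perfect_space} \<Rightarrow> real"
  assumes "\<forall>\<^sub>F x in nhds y. h x = c"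
  shows "\<not> strict_local_max h y"
proof
  assume "strict_local_max h y"
  then have less: "\<forall>\<^sub>F x in at y. h x < h y" by (simp add: strict_local_max_iff_eventually)
  have "h y = c" using assms by (rule eventually_nhds_x_imp_x)
  then have "\<forall>\<^sub>F x in at y. h x = h y"
    using assms by (simp add: eventually_nhds_conv_at)
  with less have "\<forall>\<^sub>F x in at y. False" by eventually_elim simp
  then show False by simp
qed

lemma strict_local_max_max_cases:
  assumes "strict_local_max (\<lambda>x. max (p x) (q x)) y"
  shows "strict_local_max p y \<or> strict_local_max q y"
proof (cases "q y \<le> p y")
  case True
  then have "strict_local_max p y"
    using assms unfolding strict_local_max_iff_eventually
    by (auto elim: eventually_mono)
  then show ?thesis ..
next
  case False
  then have "strict_local_max q y"
    using assms unfolding strict_local_max_iff_eventually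
    by (auto elim: eventually_mono)
  then show ?thesis ..
qed

lemma strict_local_max_max_if_dominated:
  assumes "strict_local_max p y" and "\<forall>\<^sub>F x in nhds y. q x \<le> p x"
  shows "strict_local_max (\<lambda>x. max (p x) (q x)) y"
proof (rule strict_local_max_cong_nhds)
  show "\<forall>\<^sub>F x in nhds y. max (p x) (q x) = p x"
    using assms(2) by (rule eventually_mono) simp
qed (rule assms(1))

lemma eventually_zero_outside_fsupp:
  assumes "y \<notin> fsupp f"
  shows "\<forall>\<^sub>F x in nhds y. f x = 0"
proof -
  have "open (- fsupp f)" unfolding fsupp_def by (intro open_Compl closed_closure)
  then have "\<forall>\<^sub>F x in nhds y. x \<in> - fsupp f"
    using assms by (intro eventually_nhds_in_open) auto
  moreover have "f x = 0" if "x \<in> - fsupp f" for x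
    using that closure_subset[of "{x. f x \<noteq> 0}"] unfolding fsupp_def by blast
  ultimately show ?thesis by (auto elim: eventually_mono)
qed

lemma kd_eventually_eq_sum_active:
  assumes "finite I"
  shows "\<forall>\<^sub>F x in nhds y. kd I F x = (\<Sum>k\<in>{k\<in>I. y \<in> fsupp (F k)}. F k x)"
proof -
  have "\<forall>\<^sub>F x in nhds y. \<forall>k\<in>{k\<in>I. y \<notin> fsupp (F k)}. F k x = 0"
    using assms by (intro eventually_ball_finite) (auto intro: eventually_zero_outside_fsupp)
  then show ?thesis
    unfolding kd_def by (rule eventually_mono) (auto intro: sum.mono_neutral_right assms)
qed

lemma keypoint_family_active_eq_singleton:
  assumes "keypoint_family I F" and "k \<in> I" and "y \<in> fsupp (F k)"
  shows "{k'\<in>I. y \<in> fsupp (F k')} = {k}"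
  using assms unfolding keypoint_family_def by blast

lemma kd_eventually_eq_component:
  assumes "keypoint_family I F" and "k \<in> I" and "y \<in> fsupp (F k)"
  shows "\<forall>\<^sub>F x in nhds y. kd I F x = F k x"
  using kd_eventually_eq_sum_active[where I=I and F=F and y=y] assms
  by (simp add: keypoint_family_active_eq_singleton keypoint_family_def)

lemma kd_eventually_zero:
  assumes "keypoint_family I F" and "\<forall>k\<in>I. y \<notin> fsupp (F k)"
  shows "\<forall>\<^sub>F x in nhds y. kd I F x = 0"
proof -
  have no_active: "{k\<in>I. y \<in> fsupp (F k)} = {}" using assms(2) by blast
  show ?thesis
    using kd_eventually_eq_sum_active[where I=I and F=F and y=y] assms(1)
    unfolding no_active keypoint_family_def by simp
qed

lemma strict_local_max_kp_mu:
  assumes "keypoint f"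
  shows "strict_local_max f (kp_mu f)"
  using assms unfolding keypoint_def kp_mu_def by (blast intro: theI')

lemma kp_mu_unique:
  assumes "keypoint f" and "strict_local_max f y"
  shows "y = kp_mu f"
  using assms strict_local_max_kp_mu unfolding keypoint_def by blast

lemma kp_mu_in_fsupp:
  assumes "keypoint f"
  shows "kp_mu f \<in> fsupp f"
proof (rule ccontr)
  assume "kp_mu f \<notin> fsupp f"
  then have "\<forall>\<^sub>F x in nhds (kp_mu f). f x = 0"
    by (rule eventually_zero_outside_fsupp)
  then show False
    using not_strict_local_max_if_locally_const strict_local_max_kp_mu[OF assms] by blast
qed

lemma kd_eventually_eq_at_kp_mu:
  assumes "keypoint_family I F" and "k \<in> I"
  shows "\<forall>\<^sub>F x in nhds (kp_mu (F k)). kd I F x = F k x"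
  using assms by (intro kd_eventually_eq_component kp_mu_in_fsupp) (auto simp: keypoint_family_def)

lemma strict_local_max_kd_iff:
  assumes "keypoint_family I F"
  shows "strict_local_max (kd I F) y \<longleftrightarrow> y \<in> (\<lambda>k. kp_mu (F k)) ` I"
proof
  assume max: "strict_local_max (kd I F) y"
  show "y \<in> (\<lambda>k. kp_mu (F k)) ` I"
  proof (cases "\<exists>k\<in>I. y \<in> fsupp (F k)")
    case True
    then obtain k where k: "k \<in> I" "y \<in> fsupp (F k)" by blast
    have "\<forall>\<^sub>F x in nhds y. F k x = kd I F x"
      using kd_eventually_eq_component[OF assms k] by (simp add: eq_commute)
    then have "strict_local_max (F k) y" using max by (rule strict_local_max_cong_nhds)
    then have "y = kp_mu (F k)"
      using assms k(1) by (intro kp_mu_unique) (auto simp: keypoint_family_def)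
    then show ?thesis using k(1) by blast
  next
    case False
    then have "\<forall>\<^sub>F x in nhds y. kd I F x = 0"
      using kd_eventually_zero[OF assms] by blast
    then show ?thesis using max not_strict_local_max_if_locally_const by blast
  qed
next
  assume "y \<in> (\<lambda>k. kp_mu (F k)) ` I"
  then obtain k where k: "k \<in> I" "y = kp_mu (F k)" by blast
  have "strict_local_max (F k) y"
    using assms k by (auto intro: strict_local_max_kp_mu simp: keypoint_family_def)
  then show "strict_local_max (kd I F) y"
    using kd_eventually_eq_at_kp_mu[OF assms k(1)] k(2) by (auto intro: strict_local_max_cong_nhds)
qed

lemma not_subsumed_iff_eventually_le:
  "\<not> subsumed f g \<longleftrightarrow> (\<forall>\<^sub>F x in nhds (kp_mu f). g x \<le> f x)"
  unfolding subsumed_def eventually_nhds by blast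

lemma kd_eventually_le_if_not_subsumed:
  assumes "keypoint f" and "keypoint_family J G" and "\<forall>j\<in>J. \<not> subsumed f (G j)"
  shows "\<forall>\<^sub>F x in nhds (kp_mu f). kd J G x \<le> f x"
proof (cases "\<exists>j\<in>J. kp_mu f \<in> fsupp (G j)")
  case True
  then obtain j where j: "j \<in> J" "kp_mu f \<in> fsupp (G j)" by blast
  have "\<forall>\<^sub>F x in nhds (kp_mu f). G j x \<le> f x"
    using assms(3) j(1) not_subsumed_iff_eventually_le by blast
  with kd_eventually_eq_component[OF assms(2) j] show ?thesis
    by (auto elim: eventually_mono[OF eventually_conj])
next
  case False
  have "\<forall>x. 0 \<le> f x" using assms(1) by (simp add: keypoint_def)
  moreover have "\<forall>\<^sub>F x in nhds (kp_mu f). kd J G x = 0"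
    using kd_eventually_zero[OF assms(2)] False by blast
  ultimately show ?thesis by (auto elim: eventually_mono)
qed

lemma kd_partners_sym: "kd_partners I F J G \<Longrightarrow> kd_partners J G I F"
  unfolding kd_partners_def kp_partners_def by blast

lemma strict_local_max_max_kd_at_kp_mu:
  assumes "keypoint_family I F" and "keypoint_family J G" and "kd_partners I F J G"
    and "k \<in> I"
  shows "strict_local_max (\<lambda>x. max (kd I F x) (kd J G x)) (kp_mu (F k))"
proof (rule strict_local_max_max_if_dominated)
  have kp: "keypoint (F k)" using assms(1,4) by (simp add: keypoint_family_def)
  show "strict_local_max (kd I F) (kp_mu (F k))"
    using assms(1,4) strict_local_max_kd_iff by blast
  have "\<forall>j\<in>J. \<not> subsumed (F k) (G j)"
    using assms(3,4) by (simp add: kd_partners_def kp_partners_def)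
  with kd_eventually_le_if_not_subsumed[OF kp assms(2)] kd_eventually_eq_at_kp_mu[OF assms(1,4)]
  show "\<forall>\<^sub>F x in nhds (kp_mu (F k)). kd J G x \<le> kd I F x"
    by (auto elim: eventually_mono[OF eventually_conj])
qed

theorem mainTheorem4:
  fixes I :: "'i set" and J :: "'j set"
    and F :: "'i \<Rightarrow> 'a::euclidean_space \<Rightarrow> real" and G :: "'j \<Rightarrow> 'a \<Rightarrow> real"
  assumes "keypoint_family I F" and "keypoint_family J G"
    and "kd_partners I F J G"
  shows "{y. strict_local_max (\<lambda>x. max (kd I F x) (kd J G x)) y}
           = {y. strict_local_max (kd I F) y} \<union> {y. strict_local_max (kd J G) y}
       \<and> {y. strict_local_max (kd I F) y} \<union> {y. strict_local_max (kd J G) y}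
           = (\<lambda>k. kp_mu (F k)) ` I \<union> (\<lambda>j. kp_mu (G j)) ` J"
proof
  let ?M = "\<lambda>x. max (kd I F x) (kd J G x)"
  note maxima_I = strict_local_max_kd_iff[OF assms(1)]
    and maxima_J = strict_local_max_kd_iff[OF assms(2)]
  have max_at_I: "strict_local_max ?M (kp_mu (F k))" if "k \<in> I" for k
    using strict_local_max_max_kd_at_kp_mu[OF assms that] .
  have "strict_local_max (\<lambda>x. max (kd J G x) (kd I F x)) (kp_mu (G j))" if "j \<in> J" for j
    using strict_local_max_max_kd_at_kp_mu[OF assms(2,1) kd_partners_sym[OF assms(3)] that] .
  then have max_at_J: "strict_local_max ?M (kp_mu (G j))" if "j \<in> J" for j
    using that by (simp only: max.commute)
  show "{y. strict_local_max ?M y}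
           = {y. strict_local_max (kd I F) y} \<union> {y. strict_local_max (kd J G) y}"
  proof (intro set_eqI iffI)
    fix y
    assume "y \<in> {y. strict_local_max ?M y}"
    then show "y \<in> {y. strict_local_max (kd I F) y} \<union> {y. strict_local_max (kd J G) y}"
      using strict_local_max_max_cases by blast
  next
    fix y
    assume "y \<in> {y. strict_local_max (kd I F) y} \<union> {y. strict_local_max (kd J G) y}"
    then show "y \<in> {y. strict_local_max ?M y}"
      unfolding Un_iff mem_Collect_eq maxima_I maxima_J using max_at_I max_at_J by blast
  qed
  show "{y. strict_local_max (kd I F) y} \<union> {y. strict_local_max (kd J G) y}
           = (\<lambda>k. kp_mu (F k)) ` I \<union> (\<lambda>j. kp_mu (G j)) ` J"
    unfolding maxima_I maxima_J by blast
qed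

end
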